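(* Let $\alpha$ be a propositional variable. There is no formula $\theta$ built from propositional variables and $\bot$ using only $\land,\lor,\rightarrow,\nabla$ (in particular not containing $\Delta$) such that for every nIML1-F1-model and every world $w$ of it, $w\Vdash\Delta\alpha$ iff $w\Vdash\theta$. That is, $\Delta$ is not definable in terms of the other connectives.
   Context: Formulas are built from a denumerable set $PV$ of propositional variables and $\bot$ using binary $\land,\lor,\rightarrow$ and unary $\Delta,\nabla$. An nIML1-model is a triple $\langle W,\mathcal{N},V\rangle$ with $W\neq\emptyset$, $\mathcal{N}:W\to P(P(W))$ satisfying for all $w$: (a) $w\in\bigcap\mathcal{N}_w$; (b) $\bigcap\mathcal{N}_w\in\mathcal{N}_w$; (c) $u\in\bigcap\mathcal{N}_w\Rightarrow\bigcap\mathcal{N}_u\subseteq\bigcap\mathcal{N}_w$; (d) $\bigcap\mathcal{N}_w\subseteq X\subseteq\bigcup\mathcal{N}_w\Rightarrow X\in\mathcal{N}_w$; (e) $u\in\bigcap\mathcal{N}_w\Rightarrow\bigcup\mathcal{N}_u\subseteq\bigcup\mathcal{N}_w$ ($\bigcap\mathcal{N}_w$, $\bigcup\mathcal{N}_w$ the intersection and union of the family $\mathcal{N}_w$), and $V:PV\to P(W)$ with $w\in V(q)\Rightarrow\bigcap\mathcal{N}_w\subseteq V(q)$. It is an nIML1-F1-model if moreover: whenever $u\in\bigcap\mathcal{N}_w$ and $v\in\bigcup\mathcal{N}_w$, there is $z$ with $z\in\bigcup\mathcal{N}_u\cap\bigcap\mathcal{N}_v$. Forcing: atoms via $V$; $\bot$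 never; $\land,\lor$ pointwise; $w\Vdash\varphi\rightarrow\psi$ iff every $v\in\bigcap\mathcal{N}_w$ has $v\nVdash\varphi$ or $v\Vdash\psi$; $w\Vdash\Delta\varphi$ iff every $v\in\bigcup\mathcal{N}_w$ has $v\Vdash\varphi$; $w\Vdash\nabla\varphi$ iff some $v\in\bigcup\mathcal{N}_w$ has $v\Vdash\varphi$. *)

theory Defs
  imports Main
begin

datatype fm =
    Var nat
  | Bot
  | And fm fm
  | Or fm fm
  | Imp fm fm
  | Dlt fm
  | Nbl fm

fun delta_free :: "fm \<Rightarrow> bool" where
  "delta_free (Var q) = True"
| "delta_free Bot = True"
| "delta_free (And a b) = (delta_free a \<and> delta_free b)"
| "delta_free (Or a b) = (delta_free a \<and> delta_free b)"
| "delta_free (Imp a b) = (delta_free a \<and> delta_free b)"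
| "delta_free (Dlt a) = False"
| "delta_free (Nbl a) = delta_free a"

definition nIML1_model :: "'w set \<Rightarrow> ('w \<Rightarrow> 'w set set) \<Rightarrow> (nat \<Rightarrow> 'w set) \<Rightarrow> bool" where
  "nIML1_model W N V \<longleftrightarrow>
     W \<noteq> {} \<and>
     (\<forall>w\<in>W. N w \<subseteq> Pow W) \<and>
     (\<forall>w\<in>W. w \<in> \<Inter>(N w)) \<and>
     (\<forall>w\<in>W. \<Inter>(N w) \<in> N w) \<and>
     (\<forall>w\<in>W. \<forall>u\<in>\<Inter>(N w). \<Inter>(N u) \<subseteq> \<Inter>(N w)) \<and>
     (\<forall>w\<in>W. \<forall>X. \<Inter>(N w) \<subseteq> X \<and> X \<subseteq> \<Union>(N w) \<longrightarrow> X \<in> N w) \<and>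
     (\<forall>w\<in>W. \<forall>u\<in>\<Inter>(N w). \<Union>(N u) \<subseteq> \<Union>(N w)) \<and>
     (\<forall>q. V q \<subseteq> W) \<and>
     (\<forall>q. \<forall>w\<in>W. w \<in> V q \<longrightarrow> \<Inter>(N w) \<subseteq> V q)"

definition nIML1_F1_model :: "'w set \<Rightarrow> ('w \<Rightarrow> 'w set set) \<Rightarrow> (nat \<Rightarrow> 'w set) \<Rightarrow> bool" where
  "nIML1_F1_model W N V \<longleftrightarrow>
     nIML1_model W N V \<and>
     (\<forall>w\<in>W. \<forall>u\<in>\<Inter>(N w). \<forall>v\<in>\<Union>(N w). \<exists>z. z \<in> \<Union>(N u) \<inter> \<Inter>(N v))"

fun forces :: "('w \<Rightarrow> 'w set set) \<Rightarrow> (nat \<Rightarrow> 'w set) \<Rightarrow> 'w \<Rightarrow> fm \<Rightarrow> bool" where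
  "forces N V w (Var q) = (w \<in> V q)"
| "forces N V w Bot = False"
| "forces N V w (And a b) = (forces N V w a \<and> forces N V w b)"
| "forces N V w (Or a b) = (forces N V w a \<or> forces N V w b)"
| "forces N V w (Imp a b) =
     (\<forall>v\<in>\<Inter>(N w). \<not> forces N V v a \<or> forces N V v b)"
| "forces N V w (Dlt a) = (\<forall>v\<in>\<Union>(N w). forces N V v a)"
| "forces N V w (Nbl a) = (\<exists>v\<in>\<Union>(N w). forces N V v a)"

end

theory Submission
  imports Defs
begin

text \<open>Take four worlds 0, 1, 2, 3 with \<open>\<alpha>\<close> true everywhere except at 1, where world 2 sees
  (via \<open>\<Union>\<N>\<^sub>2\<close>) exactly {0, 2} and world 3 sees {0, 1, 3}, while the cores
  \<open>\<Inter>\<N>\<^sub>2\<close>, \<open>\<Inter>\<N>\<^sub>3\<close> are {2}, {3}. Then \<open>\<Delta>\<alpha>\<close> holds at 2 but not at 3. A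
  \<open>\<Delta>\<close>-free formula cannot tell 2 from 3: implication only looks at the cores, and \<open>\<nabla>\<close> at 3
  additionally sees world 1 only, which cannot force anything that 0 (seen by both) does not
  force, since 0 lies in the core of 1.\<close>

definition interval_nbhd :: "('w \<Rightarrow> 'w set) \<Rightarrow> ('w \<Rightarrow> 'w set) \<Rightarrow> 'w \<Rightarrow> 'w set set" where
  "interval_nbhd I U w = {X. I w \<subseteq> X \<and> X \<subseteq> U w}"

lemma Inter_interval_nbhd: "I w \<subseteq> U w \<Longrightarrow> \<Inter>(interval_nbhd I U w) = I w"
  unfolding interval_nbhd_def by blast

lemma Union_interval_nbhd: "I w \<subseteq> U w \<Longrightarrow> \<Union>(interval_nbhd I U w) = U w"
  unfolding interval_nbhd_def by blast

lemma nIML1_F1_model_interval_nbhd: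
  assumes "W \<noteq> {}"
    and bounds: "\<And>w. w \<in> W \<Longrightarrow> w \<in> I w \<and> I w \<subseteq> U w \<and> U w \<subseteq> W"
    and mono: "\<And>w u. w \<in> W \<Longrightarrow> u \<in> I w \<Longrightarrow> I u \<subseteq> I w \<and> U u \<subseteq> U w"
    and "\<And>q. V q \<subseteq> W"
    and persistent: "\<And>q w. w \<in> W \<Longrightarrow> w \<in> V q \<Longrightarrow> I w \<subseteq> V q"
    and confluent: "\<And>w u v. w \<in> W \<Longrightarrow> u \<in> I w \<Longrightarrow> v \<in> U w \<Longrightarrow> U u \<inter> I v \<noteq> {}"
  shows "nIML1_F1_model W (interval_nbhd I U) V"
proof -
  have Inter: "\<Inter>(interval_nbhd I U w) = I w" and Union: "\<Union>(interval_nbhd I U w) = U w"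
    if "w \<in> W" for w
    using bounds[OF that] by (simp_all add: Inter_interval_nbhd Union_interval_nbhd)
  have core_in_W: "u \<in> W" if "w \<in> W" "u \<in> I w" for w u
    using bounds[OF that(1)] that(2) by blast
  show ?thesis
    unfolding nIML1_F1_model_def nIML1_model_def
  proof (intro conjI ballI allI impI)
    fix w assume w: "w \<in> W"
    show "interval_nbhd I U w \<subseteq> Pow W"
      using bounds[OF w] by (auto simp: interval_nbhd_def)
    show "w \<in> \<Inter>(interval_nbhd I U w)"
      using bounds[OF w] by (simp add: Inter w)
    show "\<Inter>(interval_nbhd I U w) \<in> interval_nbhd I U w"
      using bounds[OF w] by (simp only: Inter w) (simp add: interval_nbhd_def)
    show "X \<in> interval_nbhd I U w"
      if "\<Inter>(interval_nbhd I U w) \<subseteq> X \<and> X \<subseteq> \<Union>(interval_nbhd I U w)" for X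
      using that by (simp only: Inter Union w) (simp add: interval_nbhd_def)
    fix u assume "u \<in> \<Inter>(interval_nbhd I U w)"
    then have u: "u \<in> I w" "u \<in> W"
      using core_in_W[OF w] by (simp_all add: Inter w)
    show "\<Inter>(interval_nbhd I U u) \<subseteq> \<Inter>(interval_nbhd I U w)"
      "\<Union>(interval_nbhd I U u) \<subseteq> \<Union>(interval_nbhd I U w)"
      using mono[OF w u(1)] by (simp_all add: Inter Union w u(2))
    fix v assume "v \<in> \<Union>(interval_nbhd I U w)"
    then have "v \<in> U w" "v \<in> W"
      using bounds[OF w] by (auto simp: Union w)
    then show "\<exists>z. z \<in> \<Union>(interval_nbhd I U u) \<inter> \<Inter>(interval_nbhd I U v)"
      using confluent[OF w u(1)] by (auto simp: Inter Union u(2))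
  qed (use assms in \<open>auto simp: Inter\<close>)
qed

definition counter_inner :: "nat \<Rightarrow> nat set" where
  "counter_inner w = (if w = 1 then {0, 1} else {w})"

definition counter_outer :: "nat \<Rightarrow> nat set" where
  "counter_outer w = (if w = 3 then {0, 1, 3} else {0, w})"

abbreviation counter_nbhd :: "nat \<Rightarrow> nat set set" where
  "counter_nbhd \<equiv> interval_nbhd counter_inner counter_outer"

definition counter_val :: "nat \<Rightarrow> nat set" where
  "counter_val q = {0, 2, 3}"

lemma counter_inner_subset_outer: "counter_inner w \<subseteq> counter_outer w"
  unfolding counter_inner_def counter_outer_def by auto

lemma Inter_counter_nbhd [simp]: "\<Inter>(counter_nbhd w) = counter_inner w"
  by (simp add: Inter_interval_nbhd counter_inner_subset_outer)

lemma Union_counter_nbhd [simp]: "\<Union>(counter_nbhd w) = counter_outer w"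
  by (simp add: Union_interval_nbhd counter_inner_subset_outer)

lemma nIML1_F1_model_counter: "nIML1_F1_model {0, 1, 2, 3} counter_nbhd counter_val"
  by (rule nIML1_F1_model_interval_nbhd)
     (auto simp: counter_inner_def counter_outer_def counter_val_def split: if_splits)

lemma delta_free_counter_invariant:
  "delta_free \<phi> \<Longrightarrow>
     (forces counter_nbhd counter_val 2 \<phi> \<longleftrightarrow> forces counter_nbhd counter_val 3 \<phi>) \<and>
     (forces counter_nbhd counter_val 1 \<phi> \<longrightarrow> forces counter_nbhd counter_val 0 \<phi>)"
proof (induction \<phi>)
  case (Imp a b)
  then show ?case by simp (simp add: counter_inner_def)
next
  case (Nbl a)
  then show ?case by simp (auto simp: counter_outer_def)
qed (auto simp: counter_val_def)

lemma counter_separates_Dlt: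
  "forces counter_nbhd counter_val 2 (Dlt (Var \<alpha>))"
  "\<not> forces counter_nbhd counter_val 3 (Dlt (Var \<alpha>))"
  by (simp_all add: counter_outer_def counter_val_def)

theorem lemma9p3:
  fixes \<alpha> :: nat
  shows "\<not> (\<exists>\<theta>. delta_free \<theta> \<and>
            (\<forall>(W :: nat set) N V. nIML1_F1_model W N V \<longrightarrow>
               (\<forall>w\<in>W. forces N V w (Dlt (Var \<alpha>)) \<longleftrightarrow> forces N V w \<theta>)))"
proof
  assume "\<exists>\<theta>. delta_free \<theta> \<and>
            (\<forall>(W :: nat set) N V. nIML1_F1_model W N V \<longrightarrow>
               (\<forall>w\<in>W. forces N V w (Dlt (Var \<alpha>)) \<longleftrightarrow> forces N V w \<theta>))"
  then obtain \<theta> where "delta_free \<theta>"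
    and defines_Dlt: "\<forall>w\<in>{0, 1, 2, 3}.
      forces counter_nbhd counter_val w (Dlt (Var \<alpha>)) \<longleftrightarrow> forces counter_nbhd counter_val w \<theta>"
    using nIML1_F1_model_counter by blast
  then have "forces counter_nbhd counter_val 2 \<theta> \<longleftrightarrow> forces counter_nbhd counter_val 3 \<theta>"
    using delta_free_counter_invariant by blast
  with defines_Dlt counter_separates_Dlt show False by blast
qed

end
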